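(* Let the Standing Assumption hold, and let $z\in\mathbb R^n$ with $\eta\coloneq\eta(z)\ne0$. Write $M\coloneq M(z)$. 1. There exists $P\in\mathbb R^{n\times n}$ with $M+P\preceq0$ and $P\eta=0$. One such $P$ is obtained as follows. Let $\mathcal W\subseteq\mathbb R^n$ be any subspace with $\mathbb R^n=\operatorname{span}\{\eta\}\oplus\mathcal W$. Let $w\in\mathbb R^n$ satisfy $\mathcal W^\perp=\operatorname{span}\{w\}$. Then $w^{\mathsf T}\eta\ne0$; set $\mathcal P\coloneq\frac{\eta w^{\mathsf T}}{w^{\mathsf T}\eta}$. Define the symmetric matrix $P_{\mathsf H}\coloneq -M_{\mathsf H}+\mathcal P^{\mathsf T}M_{\mathsf H}\mathcal P$. There exists a skew-symmetric matrix $P_{\mathsf S}$ with $P_{\mathsf S}\eta=-P_{\mathsf H}\eta$, and for any such $P_{\mathsf S}$ the matrix $P\coloneq P_{\mathsf H}+P_{\mathsf S}$ satisfies $M+P\preceq0$ and $P\eta=0$. 2. If moreover $\eta^{\mathsf T}M_{\mathsf H}\eta\ne0$, then $P\coloneq -M_{\mathsf H}+\dfrac{M_{\mathsf H}\eta\eta^{\mathsf T}M_{\mathsf H}}{\eta^{\mathsf T}M_{\mathsf H}\eta}$ satisfies $M+P\preceq0$ and $P\eta=0$.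
   Context: Setting. Let $n,m$ be positive integers. Let $\mathcal H\colon\mathbb R^n\to\mathbb R$ be continuously differentiable with $\mathcal H\ge 0$, and set $\eta\coloneq\nabla\mathcal H\colon\mathbb R^n\to\mathbb R^n$. Let $f\colon\mathbb R^n\to\mathbb R^n$ and $B\colon\mathbb R^n\to\mathbb R^{n\times m}$. Consider the system $\dot z = f(z)+B(z)u$, $y=B(z)^{\mathsf T}\eta(z)$. Notation. For $A\in\mathbb R^{n\times n}$: $A_{\mathsf H}\coloneq\tfrac12(A+A^{\mathsf T})$, $A_{\mathsf S}\coloneq\tfrac12(A-A^{\mathsf T})$, and $A\preceq0$ means $x^{\mathsf T}Ax\le0$ for all $x\in\mathbb R^n$. Property (P): there exist $p\in\mathbb N$ and $\ell\colon\mathbb R^n\to\mathbb R^p$ with $\eta(z)^{\mathsf T}f(z)=-\ell(z)^{\mathsf T}\ell(z)$ for all $z$. Standing Assumption: property (P) holds; $f,\eta$ are $C^1$; $\eta\colon\mathbb R^n\to\mathbb R^n$ is bijective; $f(\eta^{-1}(0))=0$; and $D\eta(z)$ is invertible for all $z\in\mathbb R^n$. Definition of $M$. Under the Standing Assumption $\eta^{-1}$ is $C^1$, and $M(z)\coloneq\int_0^1 D(f\circ\eta^{-1})(s\,\eta(z))\,\mathrm ds=\int_0^1 Df(\zeta_s)D\eta(\zeta_s)^{-1}\,\mathrm ds$, where $\zeta_s\coloneq\eta^{-1}(s\eta(z))$. This satisfies $f(z)=M(z)\eta(z)$ for all $z$. *)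

theory Defs
  imports "HOL-Analysis.Analysis"
begin

definition herm_part :: "real^'n^'n \<Rightarrow> real^'n^'n" where
  "herm_part A = (1/2) *\<^sub>R (A + transpose A)"

definition skew_part :: "real^'n^'n \<Rightarrow> real^'n^'n" where
  "skew_part A = (1/2) *\<^sub>R (A - transpose A)"

definition nsd :: "real^'n^'n \<Rightarrow> bool" where
  "nsd A \<longleftrightarrow> (\<forall>x. x \<bullet> (A *v x) \<le> 0)"

definition outer :: "real^'n \<Rightarrow> real^'n \<Rightarrow> real^'n^'n" where
  "outer a b = (\<chi> i j. a $ i * b $ j)"

definition C1_with :: "(real^'n \<Rightarrow> real^'k) \<Rightarrow> (real^'n \<Rightarrow> real^'n^'k) \<Rightarrow> bool" where
  "C1_with g Dg \<longleftrightarrow> (\<forall>z. (g has_derivative (\<lambda>v. Dg z *v v)) (at z)) \<and> continuous_on UNIV Dg"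

definition Mmat :: "(real^'n \<Rightarrow> real^'n) \<Rightarrow> (real^'n \<Rightarrow> real^'n) \<Rightarrow> (real^'n \<Rightarrow> real^'n^'n)
    \<Rightarrow> (real^'n \<Rightarrow> real^'n^'n) \<Rightarrow> real^'n \<Rightarrow> real^'n^'n" where
  "Mmat f eta Df Deta z =
     integral {0..1::real} (\<lambda>s. Df (inv eta (s *\<^sub>R eta z)) ** matrix_inv (Deta (inv eta (s *\<^sub>R eta z))))"

end

theory Submission
  imports Defs
begin

text \<open>
  Since \<open>\<eta>\<close> is a \<open>C\<^sup>1\<close> diffeomorphism, \<open>f (\<eta>\<^sup>-\<^sup>1 (s \<eta>(z)))\<close> is a path from \<open>f (\<eta>\<^sup>-\<^sup>1 0) = 0\<close>
  to \<open>f z\<close> whose velocity is \<open>Df D\<eta>\<^sup>-\<^sup>1 \<eta>(z)\<close>; integrating gives \<open>f z = M \<eta>\<close>. Hence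
  \<open>\<eta>\<^sup>T M\<^sub>H \<eta> = \<eta>\<^sup>T f z = -|\<ell>|\<^sup>2 \<le> 0\<close>, and only this sign matters. For any \<open>w\<close> with
  \<open>w\<^sup>T \<eta> \<noteq> 0\<close> the oblique projection \<open>\<P> = \<eta> w\<^sup>T / w\<^sup>T \<eta>\<close> onto \<open>span {\<eta>}\<close> turns the
  quadratic form of \<open>M + P\<^sub>H\<close> into \<open>x \<mapsto> (\<P> x)\<^sup>T M\<^sub>H (\<P> x) = (w\<^sup>T x / w\<^sup>T \<eta>)\<^sup>2 \<eta>\<^sup>T M\<^sub>H \<eta>\<close>, which
  is nonpositive; moreover \<open>\<eta>\<^sup>T P\<^sub>H \<eta> = 0\<close>, so the skew part can cancel \<open>P\<^sub>H \<eta>\<close> without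
  changing the quadratic form. For the rank-one choice of \<open>P\<close> the form of \<open>M + P\<close> is
  \<open>(\<eta>\<^sup>T M\<^sub>H x)\<^sup>2 / \<eta>\<^sup>T M\<^sub>H \<eta>\<close>, nonpositive because the denominator is negative.
\<close>

lemma quadratic_form_transpose: "(x::real^'n) \<bullet> (transpose A *v x) = x \<bullet> (A *v x)"
  using dot_lmul_matrix[of x A x] by (simp add: inner_commute)

lemma inner_transpose_matrix_vector: "(x::real^'n) \<bullet> (transpose A *v y) = (A *v x) \<bullet> y"
  by (metis dot_lmul_matrix inner_commute transpose_matrix_vector transpose_transpose)

lemma matrix_vector_mult_uminus_left: "(- A) *v x = - (A *v (x::real^'n))"
  by (simp add: matrix_vector_mult_def vec_eq_iff sum_negf)

lemma herm_part_matrix_vector: "herm_part A *v x = (1/2) *\<^sub>R (A *v x + transpose A *v x)"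
  unfolding herm_part_def
  by (metis matrix_vector_mult_add_rdistrib scaleR_matrix_vector_assoc)

lemma quadratic_form_herm_part: "(x::real^'n) \<bullet> (herm_part A *v x) = x \<bullet> (A *v x)"
  unfolding herm_part_matrix_vector
  by (simp only: inner_scaleR_right inner_add_right quadratic_form_transpose) simp

lemma transpose_herm_part: "transpose (herm_part A) = herm_part (A::real^'n^'n)"
  unfolding herm_part_def by (simp add: transpose_def vec_eq_iff algebra_simps)

lemma herm_part_inner_commute: "(x::real^'n) \<bullet> (herm_part A *v y) = y \<bullet> (herm_part A *v x)"
  by (metis transpose_herm_part inner_commute inner_transpose_matrix_vector)

lemma quadratic_form_skew:
  assumes "transpose S = - S"
  shows "(x::real^'n) \<bullet> (S *v x) = 0"
proof -
  have "x \<bullet> (S *v x) = x \<bullet> (transpose S *v x)" by (rule quadratic_form_transpose[symmetric])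
  also have "\<dots> = - (x \<bullet> (S *v x))"
    using assms by (simp add: matrix_vector_mult_uminus_left inner_minus_right)
  finally show ?thesis by simp
qed

lemma outer_matrix_vector: "outer a b *v x = (b \<bullet> x) *\<^sub>R (a::real^'n)"
  by (simp add: outer_def matrix_vector_mult_def inner_vec_def vec_eq_iff sum_distrib_left
      sum_distrib_right mult.commute mult.left_commute)

lemma skew_matrix_maps_to_orthogonal:
  fixes e v :: "real^'n"
  assumes "e \<noteq> 0" and "v \<bullet> e = 0"
  shows "\<exists>S :: real^'n^'n. transpose S = - S \<and> S *v e = v"
proof -
  define S where "S = (1 / (e \<bullet> e)) *\<^sub>R (outer v e - outer e v)"
  have "transpose S = - S"
    unfolding S_def by (simp add: transpose_def outer_def vec_eq_iff field_simps)
  moreover have "S *v e = v"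
    unfolding S_def using assms
    by (simp add: scaleR_matrix_vector_assoc[symmetric] matrix_vector_mult_diff_rdistrib
        outer_matrix_vector inner_commute)
  ultimately show ?thesis by blast
qed

lemma matrix_inv_right: "invertible (A::real^'n^'n) \<Longrightarrow> A ** matrix_inv A = mat 1"
  unfolding invertible_def matrix_inv_def by (metis (mono_tags, lifting) someI_ex)

lemma bounded_linear_matrix_vector_mult_left: "bounded_linear (\<lambda>A::real^'n^'m. A *v v)"
proof -
  have "linear (\<lambda>A::real^'n^'m. A *v v)"
    by (rule linearI) (simp_all add: matrix_vector_mult_add_rdistrib scaleR_matrix_vector_assoc)
  then show ?thesis by (simp add: linear_conv_bounded_linear)
qed

lemma C1_with_inv_has_derivative:
  fixes g :: "real^'n \<Rightarrow> real^'n"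
  assumes g_C1: "C1_with g Dg" and g_bij: "bij g" and Dg_inv: "\<forall>x. invertible (Dg x)"
  shows "(inv g has_derivative (\<lambda>v. matrix_inv (Dg (inv g y)) *v v)) (at y)"
proof -
  define x where "x = inv g y"
  have y: "y = g x" unfolding x_def using g_bij by (simp add: bij_def surj_f_inv_f)
  have cont: "continuous_on UNIV g"
    using g_C1 unfolding C1_with_def
    by (meson continuous_at_imp_continuous_on has_derivative_continuous)
  have "(inv g has_derivative (\<lambda>v. matrix_inv (Dg x) *v v)) (at (g x))"
  proof (rule has_derivative_inverse_strong[of UNIV x g])
    show "inv g (g x) = x" for x using g_bij by (simp add: bij_def)
    show "(g has_derivative (\<lambda>v. Dg x *v v)) (at x)" using g_C1 unfolding C1_with_def by blast
    show "(\<lambda>v. Dg x *v v) \<circ> (\<lambda>v. matrix_inv (Dg x) *v v) = id"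
      using matrix_inv_right[of "Dg x"] Dg_inv by (auto simp: fun_eq_iff matrix_vector_mul_assoc)
  qed (use cont in auto)
  then show ?thesis using y g_bij by (simp add: bij_def)
qed

text \<open>
  The disjunct \<open>Mmat \<dots> = 0\<close> covers a non-integrable integrand, for which \<open>integral\<close>
  returns \<open>0\<close>. Either disjunct gives the sign of \<open>\<eta>\<^sup>T M\<^sub>H \<eta>\<close>.
\<close>
lemma Mmat_mult_eta:
  fixes eta f :: "real^'n \<Rightarrow> real^'n"
  assumes f_C1: "C1_with f Df" and eta_C1: "C1_with eta Deta" and eta_bij: "bij eta"
    and f_eq: "f (inv eta 0) = 0" and Deta_inv: "\<forall>x. invertible (Deta x)"
  shows "Mmat f eta Df Deta z *v eta z = f z \<or> Mmat f eta Df Deta z = 0"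
proof -
  define e where "e = eta z"
  define \<zeta> where "\<zeta> s = inv eta (s *\<^sub>R e)" for s :: real
  define A where "A s = Df (\<zeta> s) ** matrix_inv (Deta (\<zeta> s))" for s
  have path_derivative: "((\<lambda>s. f (\<zeta> s)) has_vector_derivative (A s *v e)) (at s)" for s
  proof -
    have "((\<lambda>s::real. s *\<^sub>R e) has_derivative (\<lambda>t. t *\<^sub>R e)) (at s)"
      by (intro derivative_eq_intros) auto
    from diff_chain_at[OF this C1_with_inv_has_derivative[OF eta_C1 eta_bij Deta_inv]]
    have "(\<zeta> has_derivative (\<lambda>t. t *\<^sub>R (matrix_inv (Deta (\<zeta> s)) *v e))) (at s)"
      unfolding \<zeta>_def by (simp add: o_def matrix_vector_mult_scaleR)
    from diff_chain_at[OF this, of f "\<lambda>v. Df (\<zeta> s) *v v"] f_C1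
    show ?thesis unfolding has_vector_derivative_def A_def C1_with_def
      by (simp add: o_def matrix_vector_mult_scaleR matrix_vector_mul_assoc)
  qed
  have "((\<lambda>s. A s *v e) has_integral (f (\<zeta> 1) - f (\<zeta> 0))) {0..1}"
    by (rule fundamental_theorem_of_calculus)
      (auto intro: has_vector_derivative_at_within path_derivative)
  moreover have "\<zeta> 1 = z" "\<zeta> 0 = inv eta 0"
    unfolding \<zeta>_def e_def using eta_bij by (simp_all add: bij_def)
  ultimately have f_integral: "((\<lambda>s. A s *v e) has_integral f z) {0..1}" using f_eq by simp
  have M: "Mmat f eta Df Deta z = integral {0..1} A"
    unfolding Mmat_def A_def \<zeta>_def e_def by simp
  show ?thesis
  proof (cases "A integrable_on {0..1}")
    case True
    then have "(A has_integral Mmat f eta Df Deta z) {0..1}" using M by (simp add: integrable_integral)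
    from has_integral_linear[OF this bounded_linear_matrix_vector_mult_left[of e]]
    have "((\<lambda>s. A s *v e) has_integral Mmat f eta Df Deta z *v e) {0..1}" by (simp add: o_def)
    with f_integral show ?thesis unfolding e_def using has_integral_unique by blast
  next
    case False
    then show ?thesis using M not_integrable_integral[OF False] by simp
  qed
qed

lemma herm_part_Mmat_eta_nonpos:
  fixes eta f :: "real^'n \<Rightarrow> real^'n"
  assumes "C1_with f Df" "C1_with eta Deta" "bij eta" "f (inv eta 0) = 0"
    "\<forall>x. invertible (Deta x)" and dissipative: "\<forall>x. eta x \<bullet> f x \<le> 0"
  shows "eta z \<bullet> (herm_part (Mmat f eta Df Deta z) *v eta z) \<le> 0"
  using Mmat_mult_eta[OF assms(1-5), of z] dissipative
  by (auto simp: quadratic_form_herm_part)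

lemma inner_normal_of_complement_nonzero:
  fixes W :: "(real^'n) set" and w e :: "real^'n"
  assumes "e \<noteq> 0" and "subspace W" and "span {e} \<inter> W = {0}"
    and sum: "{a + b | a b. a \<in> span {e} \<and> b \<in> W} = UNIV"
    and orth: "{x. \<forall>y\<in>W. orthogonal x y} = span {w}"
  shows "w \<bullet> e \<noteq> 0"
proof
  assume we: "w \<bullet> e = 0"
  have "w \<bullet> x = 0" for x
  proof -
    have "x \<in> {a + b | a b. a \<in> span {e} \<and> b \<in> W}" using sum by simp
    then obtain c b where "x = c *\<^sub>R e + b" "b \<in> W" by (auto simp: span_singleton)
    moreover have "\<forall>y\<in>W. orthogonal w y" using orth span_base[of w "{w}"] by blast
    ultimately show ?thesis using we by (simp add: inner_add_right orthogonal_def)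
  qed
  then have "w = 0" by (metis inner_eq_zero_iff)
  have "e \<notin> W" using assms(1,3) span_base[of e "{e}"] by blast
  then have "span W \<subset> span UNIV"
    using \<open>subspace W\<close> by (metis UNIV_I span_UNIV span_eq_iff psubsetI subset_UNIV)
  then obtain x where "x \<noteq> 0" "\<And>y. y \<in> span W \<Longrightarrow> orthogonal x y"
    using orthogonal_to_subspace_exists_gen by blast
  then have "x \<in> span {w}" using orth span_base[where S=W] by blast
  with \<open>w = 0\<close> \<open>x \<noteq> 0\<close> show False by simp
qed

definition oblique_projection :: "real^'n \<Rightarrow> real^'n \<Rightarrow> real^'n^'n" where
  "oblique_projection e w = (1 / (w \<bullet> e)) *\<^sub>R outer e w"

definition projection_correction :: "real^'n^'n \<Rightarrow> real^'n \<Rightarrow> real^'n \<Rightarrow> real^'n^'n" where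
  "projection_correction M e w =
     - herm_part M + transpose (oblique_projection e w) ** herm_part M ** oblique_projection e w"

lemma oblique_projection_matrix_vector:
  "oblique_projection e w *v x = ((w \<bullet> x) / (w \<bullet> e)) *\<^sub>R e"
  unfolding oblique_projection_def
  by (simp add: scaleR_matrix_vector_assoc[symmetric] outer_matrix_vector)

lemma projection_correction_matrix_vector:
  "projection_correction M e w *v x = - (herm_part M *v x)
     + ((w \<bullet> x) / (w \<bullet> e)) *\<^sub>R (transpose (oblique_projection e w) *v (herm_part M *v e))"
  unfolding projection_correction_def
  by (simp only: matrix_vector_mult_add_rdistrib matrix_vector_mult_uminus_left
      matrix_vector_mul_assoc[symmetric] oblique_projection_matrix_vector matrix_vector_mult_scaleR)

lemma quadratic_form_add_projection_correction:
  "x \<bullet> ((M + projection_correction M e w) *v x)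
     = ((w \<bullet> x) / (w \<bullet> e))\<^sup>2 * (e \<bullet> (herm_part M *v e))"
  unfolding matrix_vector_mult_add_rdistrib inner_add_right projection_correction_matrix_vector
    inner_minus_right inner_scaleR_right inner_transpose_matrix_vector oblique_projection_matrix_vector
  by (simp add: quadratic_form_herm_part power2_eq_square)

lemma inner_projection_correction_self:
  assumes "w \<bullet> e \<noteq> 0"
  shows "e \<bullet> (projection_correction M e w *v e) = 0"
  unfolding projection_correction_matrix_vector inner_add_right inner_minus_right
    inner_scaleR_right inner_transpose_matrix_vector oblique_projection_matrix_vector
  using assms by (simp add: inner_commute)

lemma nsd_add_projection_correction_skew:
  assumes "e \<bullet> (herm_part M *v e) \<le> 0"
    and "transpose S = - S" and "S *v e = - (projection_correction M e w *v e)"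
  shows "nsd (M + (projection_correction M e w + S)) \<and> (projection_correction M e w + S) *v e = 0"
proof
  show "(projection_correction M e w + S) *v e = 0"
    using assms(3) by (simp add: matrix_vector_mult_add_rdistrib)
  have "x \<bullet> ((M + (projection_correction M e w + S)) *v x)
          = ((w \<bullet> x) / (w \<bullet> e))\<^sup>2 * (e \<bullet> (herm_part M *v e))" for x
    using quadratic_form_add_projection_correction[of x M e w] quadratic_form_skew[OF assms(2), of x]
    by (simp add: matrix_vector_mult_add_rdistrib inner_add_right)
  then show "nsd (M + (projection_correction M e w + S))"
    unfolding nsd_def using assms(1) by (simp add: mult_nonneg_nonpos)
qed

lemma exists_skew_cancelling_projection_correction:
  assumes "e \<noteq> 0" and "w \<bullet> e \<noteq> 0"
  shows "\<exists>S. transpose S = - S \<and> S *v e = - (projection_correction M e w *v e)"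
  using skew_matrix_maps_to_orthogonal[OF assms(1)] inner_projection_correction_self[OF assms(2)]
  by (simp add: inner_commute)

lemma nsd_add_rank_one_correction:
  fixes M :: "real^'n^'n" and e :: "real^'n"
  assumes neg: "e \<bullet> (herm_part M *v e) < 0"
  defines "P \<equiv> - herm_part M
    + (1 / (e \<bullet> (herm_part M *v e))) *\<^sub>R (herm_part M ** outer e e ** herm_part M)"
  shows "nsd (M + P) \<and> P *v e = 0"
proof
  define m where "m = e \<bullet> (herm_part M *v e)"
  have Px: "P *v x = - (herm_part M *v x) + ((e \<bullet> (herm_part M *v x)) / m) *\<^sub>R (herm_part M *v e)"
    for x
    unfolding P_def m_def
    by (simp only: matrix_vector_mult_add_rdistrib matrix_vector_mult_uminus_left
        scaleR_matrix_vector_assoc[symmetric] matrix_vector_mul_assoc[symmetric]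
        outer_matrix_vector matrix_vector_mult_scaleR) (simp add: herm_part_inner_commute)
  show "P *v e = 0" unfolding Px using neg by (simp add: m_def)
  have "x \<bullet> ((M + P) *v x) = (e \<bullet> (herm_part M *v x))\<^sup>2 / m" for x
    unfolding matrix_vector_mult_add_rdistrib inner_add_right Px inner_minus_right inner_scaleR_right
    using herm_part_inner_commute[of x M e]
    by (simp add: quadratic_form_herm_part power2_eq_square)
  then show "nsd (M + P)"
    unfolding nsd_def using neg by (simp add: m_def divide_nonneg_neg)
qed

theorem mainTheorem7:
  fixes H :: "real^'n \<Rightarrow> real"
    and eta f :: "real^'n \<Rightarrow> real^'n"
    and Df Deta :: "real^'n \<Rightarrow> real^'n^'n"
    and z :: "real^'n"
  assumes H_nonneg: "\<forall>x. H x \<ge> 0"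
    and H_grad: "\<forall>x. (H has_derivative (\<lambda>v. eta x \<bullet> v)) (at x)"
    and propP: "\<exists>(p::nat) (ell::real^'n \<Rightarrow> nat \<Rightarrow> real).
                  \<forall>x. eta x \<bullet> f x = - (\<Sum>i<p. ell x i * ell x i)"
    and f_C1: "C1_with f Df"
    and eta_C1: "C1_with eta Deta"
    and eta_bij: "bij eta"
    and f_eq: "f (inv eta 0) = 0"
    and Deta_inv: "\<forall>x. invertible (Deta x)"
    and eta_nz: "eta z \<noteq> 0"
  shows
   "(\<exists>P :: real^'n^'n. nsd (Mmat f eta Df Deta z + P) \<and> P *v eta z = 0)
    \<and> (\<forall>(W :: (real^'n) set) (w :: real^'n).
         subspace W
         \<and> span {eta z} \<inter> W = {0}
         \<and> {a + b | a b. a \<in> span {eta z} \<and> b \<in> W} = UNIV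
         \<and> {x. \<forall>y\<in>W. orthogonal x y} = span {w}
         \<longrightarrow> w \<bullet> eta z \<noteq> 0
           \<and> (let MH = herm_part (Mmat f eta Df Deta z);
                  Pc = (1 / (w \<bullet> eta z)) *\<^sub>R outer (eta z) w;
                  PH = - MH + transpose Pc ** MH ** Pc
              in (\<exists>PS :: real^'n^'n. transpose PS = - PS \<and> PS *v eta z = - (PH *v eta z))
                 \<and> (\<forall>PS :: real^'n^'n. transpose PS = - PS \<and> PS *v eta z = - (PH *v eta z)
                      \<longrightarrow> nsd (Mmat f eta Df Deta z + (PH + PS)) \<and> (PH + PS) *v eta z = 0)))
    \<and> (let MH = herm_part (Mmat f eta Df Deta z)
       in eta z \<bullet> (MH *v eta z) \<noteq> 0 \<longrightarrow>
          (let P = - MH + (1 / (eta z \<bullet> (MH *v eta z))) *\<^sub>R (MH ** outer (eta z) (eta z) ** MH)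
           in nsd (Mmat f eta Df Deta z + P) \<and> P *v eta z = 0))"
proof -
  define M where "M = Mmat f eta Df Deta z"
  define e where "e = eta z"
  have "\<forall>x. eta x \<bullet> f x \<le> 0" using propP by (auto simp: sum_nonneg)
  then have nonpos: "e \<bullet> (herm_part M *v e) \<le> 0"
    unfolding M_def e_def using herm_part_Mmat_eta_nonpos f_C1 eta_C1 eta_bij f_eq Deta_inv by blast
  have e_nz: "e \<noteq> 0" using eta_nz e_def by simp
  note part1 = exists_skew_cancelling_projection_correction[OF e_nz]
    nsd_add_projection_correction_skew[OF nonpos]
  have "e \<bullet> e \<noteq> 0" using e_nz by simp
  then have "\<exists>P. nsd (M + P) \<and> P *v e = 0" using part1 by blast
  moreover have "w \<bullet> e \<noteq> 0" if "subspace W" "span {e} \<inter> W = {0}"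
    "{a + b | a b. a \<in> span {e} \<and> b \<in> W} = UNIV" "{x. \<forall>y\<in>W. orthogonal x y} = span {w}" for W w
    using inner_normal_of_complement_nonzero[OF e_nz that] .
  moreover have "nsd (M + P) \<and> P *v e = 0"
    if "P = - herm_part M + (1 / (e \<bullet> (herm_part M *v e))) *\<^sub>R (herm_part M ** outer e e ** herm_part M)"
      "e \<bullet> (herm_part M *v e) \<noteq> 0" for P
    using nsd_add_rank_one_correction[of e M] nonpos that by simp
  ultimately show ?thesis
    using part1 unfolding Let_def projection_correction_def oblique_projection_def M_def e_def
    by blast
qed

end
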